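(* Let $X$ be a real Hilbert space, $I=\{1,\dots,m\}$, and let $(T_i)_{i\in I}$ be averaged nonexpansive operators $X\to X$ with fixed point sets $Z_i=\operatorname{Fix}T_i$. Suppose each $T_i$ is boundedly regular, $Z=\bigcap_{i\in I}Z_i\neq\varnothing$, and the family $(Z_i)_{i\in I}$ is boundedly regular. Then for every $x_0\in X$ the sequence $((T_m\cdots T_1)^nx_0)_{n\in\mathbb N}$ converges strongly (in norm) to some point of $Z$.
   Context: $T$ is averaged nonexpansive if $T=(1-\lambda)\mathrm{Id}+\lambda N$ with $\lambda\in[0,1[$ and $N$ nonexpansive. An operator $T$ with $\operatorname{Fix}T\ne\varnothing$ is boundedly regular if for every bounded sequence $(x_n)$ with $x_n-Tx_n\to0$ we have $d_{\operatorname{Fix}T}(x_n)\to0$. A finite family $(C_i)_{i\in I}$ of closed convex sets with $C=\bigcap_iC_i\ne\varnothing$ is boundedly regular if for every bounded sequence $(x_n)$, $\max_{i}d_{C_i}(x_n)\to0$ implies $d_C(x_n)\to0$. *)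

theory Defs
  imports "HOL-Analysis.Analysis"
begin

definition nonexpansive :: "('a::real_normed_vector \<Rightarrow> 'a) \<Rightarrow> bool" where
  "nonexpansive N \<longleftrightarrow> (\<forall>x y. norm (N x - N y) \<le> norm (x - y))"

definition averaged :: "('a::real_normed_vector \<Rightarrow> 'a) \<Rightarrow> bool" where
  "averaged T \<longleftrightarrow> (\<exists>l N. 0 \<le> l \<and> l < 1 \<and> nonexpansive N \<and>
                      (\<forall>x. T x = (1 - l) *\<^sub>R x + l *\<^sub>R N x))"

definition Fix :: "('a \<Rightarrow> 'a) \<Rightarrow> 'a set" where
  "Fix T = {x. T x = x}"

definition boundedly_regular_op :: "('a::real_normed_vector \<Rightarrow> 'a) \<Rightarrow> bool" where
  "boundedly_regular_op T \<longleftrightarrow> Fix T \<noteq> {} \<and>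
     (\<forall>x :: nat \<Rightarrow> 'a. bounded (range x) \<longrightarrow> (\<lambda>n. x n - T (x n)) \<longlonglongrightarrow> 0 \<longrightarrow>
        (\<lambda>n. infdist (x n) (Fix T)) \<longlonglongrightarrow> 0)"

definition boundedly_regular_family ::
    "'i set \<Rightarrow> ('i \<Rightarrow> 'a::real_normed_vector set) \<Rightarrow> bool" where
  "boundedly_regular_family I C \<longleftrightarrow> (\<Inter>i\<in>I. C i) \<noteq> {} \<and>
     (\<forall>x :: nat \<Rightarrow> 'a. bounded (range x) \<longrightarrow>
        (\<lambda>n. Max ((\<lambda>i. infdist (x n) (C i)) ` I)) \<longlonglongrightarrow> 0 \<longrightarrow>
        (\<lambda>n. infdist (x n) (\<Inter>i\<in>I. C i)) \<longlonglongrightarrow> 0)"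

definition comp_ops :: "(nat \<Rightarrow> 'a \<Rightarrow> 'a) \<Rightarrow> nat \<Rightarrow> 'a \<Rightarrow> 'a" where
  "comp_ops T m = fold (\<lambda>i S. T i \<circ> S) [1..<Suc m] id"

end

theory Submission
  imports Defs
begin

text \<open>
  An averaged operator \<open>T = (1 - l) Id + l N\<close> is strongly
  quasi-nonexpansive: \<open>|T x - z|\<^sup>2 + c |x - T x|\<^sup>2 \<le> |x - z|\<^sup>2\<close> for all fixed points \<open>z\<close>,
  with \<open>c = 1 - l > 0\<close>.  Telescoping this inequality along the partial compositions
  shows that the iterates \<open>x\<^sub>n\<close> are Fejer monotone with respect to the common fixed-point
  set \<open>Z\<close> and that the sum of the squared lengths of all intermediate steps is
  dominated by the decrease of \<open>|x\<^sub>n - z|\<^sup>2\<close>; hence every intermediate step tends to zero.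
  Bounded regularity of each \<open>T\<^sub>i\<close> then gives \<open>d(x\<^sub>n, Fix T\<^sub>i) \<rightarrow> 0\<close>, bounded regularity
  of the family gives \<open>d(x\<^sub>n, Z) \<rightarrow> 0\<close>, and a Fejer monotone sequence whose distance to a
  closed set tends to zero converges to a point of that set.
\<close>

lemma dominated_tendsto_zero:
  fixes f :: "nat \<Rightarrow> 'a::real_normed_vector"
  assumes "g \<longlonglongrightarrow> 0" "\<And>n. norm (f n) \<le> g n"
  shows "f \<longlonglongrightarrow> 0"
  using Lim_null_comparison[OF always_eventually assms(1)] assms(2) by blast

text \<open>If \<open>d\<close> is nonnegative and drops by at least \<open>c e\<^sub>n\<close> at every step, with \<open>c > 0\<close> and
  \<open>e \<ge> 0\<close>, then \<open>e\<^sub>n \<rightarrow> 0\<close>: \<open>d\<close> converges, so its successive drops vanish.\<close>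
lemma decrease_tendsto_zero:
  fixes d e :: "nat \<Rightarrow> real"
  assumes "c > 0" "\<And>n. 0 \<le> d n" "\<And>n. 0 \<le> e n" "\<And>n. d (Suc n) + c * e n \<le> d n"
  shows "e \<longlonglongrightarrow> 0"
proof -
  have "decseq d"
    using assms(1,3,4) by (intro decseq_SucI) (smt (verit) mult_nonneg_nonneg)
  then obtain L where "d \<longlonglongrightarrow> L" using assms(2) decseq_convergent by blast
  then have "(\<lambda>n. (d n - d (Suc n)) / c) \<longlonglongrightarrow> (L - L) / c"
    using assms(1) by (intro tendsto_divide tendsto_diff tendsto_const) (auto simp: LIMSEQ_Suc)
  then have "(\<lambda>n. (d n - d (Suc n)) / c) \<longlonglongrightarrow> 0" by simp
  moreover have "norm (e n) \<le> (d n - d (Suc n)) / c" for n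
    using assms(1,3) assms(4)[of n] by (simp add: field_simps)
  ultimately show ?thesis by (rule dominated_tendsto_zero)
qed

lemma tendsto_Max_image:
  fixes f :: "'i \<Rightarrow> nat \<Rightarrow> real"
  assumes "finite I" "I \<noteq> {}" "\<And>i. i \<in> I \<Longrightarrow> f i \<longlonglongrightarrow> l i"
  shows "(\<lambda>n. Max ((\<lambda>i. f i n) ` I)) \<longlonglongrightarrow> Max (l ` I)"
  using assms
proof (induction I rule: finite_ne_induct)
  case (singleton i)
  then show ?case by simp
next
  case (insert i I)
  then show ?case by (simp add: tendsto_max)
qed

lemma infdist_tendsto_zero_shift:
  assumes "(\<lambda>n. infdist (y n) A) \<longlonglongrightarrow> 0" "(\<lambda>n. dist (x n) (y n)) \<longlonglongrightarrow> 0"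
  shows "(\<lambda>n. infdist (x n) A) \<longlonglongrightarrow> 0"
proof -
  have "(\<lambda>n. infdist (y n) A + dist (x n) (y n)) \<longlonglongrightarrow> 0"
    using tendsto_add[OF assms] by simp
  moreover have "norm (infdist (x n) A) \<le> infdist (y n) A + dist (x n) (y n)" for n
    using infdist_triangle[of "x n" A "y n"] by (simp add: infdist_nonneg)
  ultimately show ?thesis by (rule dominated_tendsto_zero)
qed

lemma fejer_monotone_convergent:
  fixes x :: "nat \<Rightarrow> 'a::complete_space"
  assumes Z: "closed Z" "Z \<noteq> {}"
    and fejer: "\<And>z n k. z \<in> Z \<Longrightarrow> n \<le> k \<Longrightarrow> dist (x k) z \<le> dist (x n) z"
    and dist_Z: "(\<lambda>n. infdist (x n) Z) \<longlonglongrightarrow> 0"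
  shows "\<exists>z\<in>Z. x \<longlonglongrightarrow> z"
proof -
  have "Cauchy x"
  proof (rule metric_CauchyI)
    fix e :: real assume "0 < e"
    then obtain N where "infdist (x N) Z < e / 2"
      using dist_Z by (metis lim_sequentially dist_real_def diff_zero infdist_nonneg abs_of_nonneg
          half_gt_zero order_refl)
    then have "(INF a\<in>Z. dist (x N) a) < e / 2" using Z(2) by (simp add: infdist_notempty)
    then obtain z where z: "z \<in> Z" "dist (x N) z < e / 2"
      using cINF_less_iff[OF Z(2) bdd_below_image_dist] by blast
    have "dist (x p) (x q) < e" if "N \<le> p" "N \<le> q" for p q
      using fejer[OF z(1) that(1)] fejer[OF z(1) that(2)] z(2) dist_triangle2[of "x p" "x q" z]
      by linarith
    then show "\<exists>M. \<forall>p\<ge>M. \<forall>q\<ge>M. dist (x p) (x q) < e" by blast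
  qed
  then obtain L where L: "x \<longlonglongrightarrow> L" using Cauchy_convergent_iff convergent_def by blast
  then have "(\<lambda>n. infdist (x n) Z) \<longlonglongrightarrow> infdist L Z" by (rule tendsto_infdist)
  then have "infdist L Z = 0" using dist_Z LIMSEQ_unique by blast
  then have "L \<in> Z" using Z in_closed_iff_infdist_zero by blast
  then show ?thesis using L by blast
qed

lemma nonexpansive_closed_Fix:
  fixes N :: "'a::real_normed_vector \<Rightarrow> 'a"
  assumes "nonexpansive N"
  shows "closed (Fix N)"
proof -
  have "continuous_on UNIV N"
    using assms unfolding nonexpansive_def continuous_on_iff dist_norm by (metis le_less_trans)
  then show ?thesis
    unfolding Fix_def by (rule closed_Collect_eq) (simp_all add: continuous_on_id)
qed

lemma averaged_nonexpansive:
  fixes T :: "'a::real_normed_vector \<Rightarrow> 'a"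
  assumes "averaged T"
  shows "nonexpansive T"
proof -
  obtain l N where l: "0 \<le> l" "l < 1" and N: "nonexpansive N"
    and TN: "\<And>x. T x = (1 - l) *\<^sub>R x + l *\<^sub>R N x"
    using assms unfolding averaged_def by blast
  have "norm (T x - T y) \<le> norm (x - y)" for x y
  proof -
    have "norm (T x - T y) = norm ((1 - l) *\<^sub>R (x - y) + l *\<^sub>R (N x - N y))"
      unfolding TN by (simp add: algebra_simps)
    also have "\<dots> \<le> (1 - l) * norm (x - y) + l * norm (N x - N y)"
      using l by (metis abs_of_nonneg diff_ge_0_iff_ge less_imp_le norm_scaleR norm_triangle_ineq)
    also have "\<dots> \<le> (1 - l) * norm (x - y) + l * norm (x - y)"
      using N l unfolding nonexpansive_def by (simp add: mult_left_mono)
    finally show ?thesis by (simp add: algebra_simps)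
  qed
  then show ?thesis unfolding nonexpansive_def by blast
qed

definition strongly_qne :: "real \<Rightarrow> ('a::real_inner \<Rightarrow> 'a) \<Rightarrow> bool" where
  "strongly_qne c T \<longleftrightarrow>
     (\<forall>x z. z \<in> Fix T \<longrightarrow> (norm (T x - z))\<^sup>2 + c * (norm (x - T x))\<^sup>2 \<le> (norm (x - z))\<^sup>2)"

lemma strongly_qneD:
  "strongly_qne c T \<Longrightarrow> z \<in> Fix T \<Longrightarrow>
     (norm (T x - z))\<^sup>2 + c * (norm (x - T x))\<^sup>2 \<le> (norm (x - z))\<^sup>2"
  unfolding strongly_qne_def by blast

lemma strongly_qne_mono:
  assumes "strongly_qne c T" "c' \<le> c"
  shows "strongly_qne c' T"
  unfolding strongly_qne_def
proof (intro allI impI)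
  fix x z assume "z \<in> Fix T"
  moreover have "c' * (norm (x - T x))\<^sup>2 \<le> c * (norm (x - T x))\<^sup>2"
    using assms(2) by (simp add: mult_right_mono)
  ultimately show "(norm (T x - z))\<^sup>2 + c' * (norm (x - T x))\<^sup>2 \<le> (norm (x - z))\<^sup>2"
    using strongly_qneD[OF assms(1), of z x] by linarith
qed

text \<open>With \<open>a = x - z\<close> and \<open>b = N x - z\<close> the defect in the inequality is
  \<open>l (|a|\<^sup>2 - |b|\<^sup>2) + l (1 - l)\<^sup>2 |a - b|\<^sup>2\<close>, which is nonnegative since \<open>|b| \<le> |a|\<close>.\<close>
lemma averaged_strongly_qne:
  fixes T :: "'a::real_inner \<Rightarrow> 'a"
  assumes "averaged T"
  shows "\<exists>c>0. strongly_qne c T"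
proof -
  obtain l N where l: "0 \<le> l" "l < 1" and N: "nonexpansive N"
    and TN: "\<And>x. T x = (1 - l) *\<^sub>R x + l *\<^sub>R N x"
    using assms unfolding averaged_def by blast
  have "(norm (T x - z))\<^sup>2 + (1 - l) * (norm (x - T x))\<^sup>2 \<le> (norm (x - z))\<^sup>2"
    if z: "z \<in> Fix T" for x z
  proof (cases "l = 0")
    case True
    then show ?thesis using TN by simp
  next
    case False
    then have lp: "0 < l" using l by simp
    have "l *\<^sub>R (N z - z) = 0" using z TN[of z] by (simp add: Fix_def algebra_simps)
    then have "N z = z" using lp by simp
    define a where "a = x - z"
    define b where "b = N x - z"
    have "norm b \<le> norm a" using N \<open>N z = z\<close> unfolding nonexpansive_def a_def b_def by metis
    then have ba: "b \<bullet> b \<le> a \<bullet> a"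
      by (metis norm_eq_sqrt_inner norm_ge_zero real_sqrt_le_iff inner_ge_zero)
    have ab: "0 \<le> (a - b) \<bullet> (a - b)" by simp
    have Tx: "T x - z = (1 - l) *\<^sub>R a + l *\<^sub>R b" and res: "x - T x = l *\<^sub>R (a - b)"
      unfolding a_def b_def TN by (simp_all add: algebra_simps)
    have "(norm (x - z))\<^sup>2 - ((norm (T x - z))\<^sup>2 + (1 - l) * (norm (x - T x))\<^sup>2)
        = l * (a \<bullet> a - b \<bullet> b) + l * (1 - l)\<^sup>2 * ((a - b) \<bullet> (a - b))"
      unfolding Tx res power2_norm_eq_inner a_def[symmetric]
      by (simp add: inner_add_left inner_add_right inner_diff_left inner_diff_right
          inner_commute power2_eq_square algebra_simps)
    also have "\<dots> \<ge> 0"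
      using lp ba ab by (intro add_nonneg_nonneg mult_nonneg_nonneg) auto
    finally show ?thesis by simp
  qed
  then show ?thesis
    using l unfolding strongly_qne_def by (intro exI[of _ "1 - l"]) auto
qed

lemma uniform_strongly_qne:
  fixes T :: "'i \<Rightarrow> 'a::real_inner \<Rightarrow> 'a"
  assumes "finite I" "\<And>i. i \<in> I \<Longrightarrow> averaged (T i)"
  shows "\<exists>c>0. \<forall>i\<in>I. strongly_qne c (T i)"
  using assms
proof (induction I rule: finite_induct)
  case empty
  then show ?case by (intro exI[of _ 1]) simp
next
  case (insert j I)
  then obtain c where c: "c > 0" "\<forall>i\<in>I. strongly_qne c (T i)" by blast
  obtain c' where c': "c' > 0" "strongly_qne c' (T j)"
    using averaged_strongly_qne insert.prems by blast
  show ?case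
    using c c' by (intro exI[of _ "min c c'"]) (auto intro: strongly_qne_mono)
qed

fun chain :: "(nat \<Rightarrow> 'a \<Rightarrow> 'a) \<Rightarrow> nat \<Rightarrow> 'a \<Rightarrow> 'a" where
  "chain T 0 = id"
| "chain T (Suc k) = T (Suc k) \<circ> chain T k"

lemma comp_ops_eq_chain: "comp_ops T m = chain T m"
proof (induction m)
  case 0
  then show ?case by (simp add: comp_ops_def)
next
  case (Suc m)
  have "[1..<Suc (Suc m)] = [1..<Suc m] @ [Suc m]" by simp
  then show ?case using Suc by (simp add: comp_ops_def)
qed

lemma chain_telescope:
  fixes T :: "nat \<Rightarrow> 'a::real_inner \<Rightarrow> 'a"
  assumes qne: "\<forall>i\<in>{1..m}. strongly_qne c (T i)"
    and z: "z \<in> (\<Inter>i\<in>{1..m}. Fix (T i))" and "k \<le> m"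
  shows "(norm (chain T k x - z))\<^sup>2 + c * (\<Sum>i<k. (norm (chain T i x - chain T (Suc i) x))\<^sup>2)
           \<le> (norm (x - z))\<^sup>2"
  using \<open>k \<le> m\<close>
proof (induction k)
  case 0
  then show ?case by simp
next
  case (Suc k)
  then have "Suc k \<in> {1..m}" by simp
  then have "(norm (T (Suc k) (chain T k x) - z))\<^sup>2
      + c * (norm (chain T k x - T (Suc k) (chain T k x)))\<^sup>2 \<le> (norm (chain T k x - z))\<^sup>2"
    using qne z by (blast intro: strongly_qneD)
  then show ?case using Suc by (simp add: distrib_left)
qed

lemma chain_dist_le:
  fixes T :: "nat \<Rightarrow> 'a::real_inner \<Rightarrow> 'a"
  assumes "\<forall>i\<in>{1..m}. strongly_qne c (T i)" "c \<ge> 0"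
    and "z \<in> (\<Inter>i\<in>{1..m}. Fix (T i))" "k \<le> m"
  shows "norm (chain T k x - z) \<le> norm (x - z)"
proof -
  have "0 \<le> c * (\<Sum>i<k. (norm (chain T i x - chain T (Suc i) x))\<^sup>2)"
    using \<open>c \<ge> 0\<close> by (simp add: sum_nonneg)
  moreover have "(norm (chain T k x - z))\<^sup>2
      + c * (\<Sum>i<k. (norm (chain T i x - chain T (Suc i) x))\<^sup>2) \<le> (norm (x - z))\<^sup>2"
    by (rule chain_telescope[where c = c]) (use assms in auto)
  ultimately have "(norm (chain T k x - z))\<^sup>2 \<le> (norm (x - z))\<^sup>2" by linarith
  then show ?thesis by (rule power2_le_imp_le) simp
qed

lemma iterates_fejer:
  fixes T :: "nat \<Rightarrow> 'a::real_inner \<Rightarrow> 'a"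
  assumes "\<forall>i\<in>{1..m}. strongly_qne c (T i)" "c \<ge> 0"
    and "z \<in> (\<Inter>i\<in>{1..m}. Fix (T i))"
    and x: "\<And>n. x (Suc n) = chain T m (x n)" and "n \<le> k"
  shows "norm (x k - z) \<le> norm (x n - z)"
proof -
  have "decseq (\<lambda>n. norm (x n - z))"
    using chain_dist_le[of m c T z m] assms by (intro decseq_SucI) simp
  then show ?thesis using \<open>n \<le> k\<close> by (simp add: decseq_def)
qed

lemma bounded_chain_iterates:
  fixes T :: "nat \<Rightarrow> 'a::real_inner \<Rightarrow> 'a"
  assumes "\<forall>i\<in>{1..m}. strongly_qne c (T i)" "c \<ge> 0"
    and "z \<in> (\<Inter>i\<in>{1..m}. Fix (T i))"
    and "\<And>n. x (Suc n) = chain T m (x n)" and "k \<le> m"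
  shows "bounded (range (\<lambda>n. chain T k (x n)))"
proof -
  have "chain T k (x n) \<in> cball z (norm (x 0 - z))" for n
  proof -
    have "norm (chain T k (x n) - z) \<le> norm (x n - z)"
      using chain_dist_le[of m c T z k] assms by blast
    also have "\<dots> \<le> norm (x 0 - z)" using iterates_fejer[of m c T z x 0 n] assms by blast
    finally show ?thesis by (simp add: dist_norm norm_minus_commute)
  qed
  then show ?thesis by (meson bounded_cball bounded_subset image_subset_iff rangeE)
qed

text \<open>Every intermediate step of the iteration tends to zero: by the telescoped inequality
  the sum of their squares is dominated by the drop of \<open>|x\<^sub>n - z|\<^sup>2\<close>.\<close>
lemma chain_steps_tendsto_zero:
  fixes T :: "nat \<Rightarrow> 'a::real_inner \<Rightarrow> 'a"
  assumes qne: "\<forall>i\<in>{1..m}. strongly_qne c (T i)" and "c > 0"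
    and z: "z \<in> (\<Inter>i\<in>{1..m}. Fix (T i))"
    and x: "\<And>n. x (Suc n) = chain T m (x n)" and "j < m"
  shows "(\<lambda>n. norm (chain T j (x n) - chain T (Suc j) (x n))) \<longlonglongrightarrow> 0"
proof -
  define g where "g i n = norm (chain T i (x n) - chain T (Suc i) (x n))" for i n
  define e where "e n = (\<Sum>i<m. (g i n)\<^sup>2)" for n
  have "e \<longlonglongrightarrow> 0"
  proof (rule decrease_tendsto_zero[OF \<open>c > 0\<close>])
    show "(norm (x (Suc n) - z))\<^sup>2 + c * e n \<le> (norm (x n - z))\<^sup>2" for n
      unfolding x e_def g_def by (rule chain_telescope[where c = c]) (use qne z in auto)
  qed (simp_all add: e_def sum_nonneg)
  then have "(\<lambda>n. sqrt (e n)) \<longlonglongrightarrow> 0"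
    using tendsto_real_sqrt[of e 0] by simp
  moreover have "norm (g j n) \<le> sqrt (e n)" for n
    using \<open>j < m\<close> by (auto simp: g_def e_def intro!: real_le_rsqrt member_le_sum)
  ultimately have "g j \<longlonglongrightarrow> 0" by (rule dominated_tendsto_zero)
  then show ?thesis unfolding g_def .
qed

lemma chain_displacement_tendsto_zero:
  fixes T :: "nat \<Rightarrow> 'a::real_normed_vector \<Rightarrow> 'a"
  assumes "\<And>i. i < k \<Longrightarrow> (\<lambda>n. norm (chain T i (x n) - chain T (Suc i) (x n))) \<longlonglongrightarrow> 0"
  shows "(\<lambda>n. norm (x n - chain T k (x n))) \<longlonglongrightarrow> 0"
  using assms
proof (induction k)
  case 0
  then show ?case by simp
next
  case (Suc k)
  let ?d = "\<lambda>n. norm (x n - chain T k (x n))"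
  let ?step = "\<lambda>n. norm (chain T k (x n) - chain T (Suc k) (x n))"
  have "?d \<longlonglongrightarrow> 0" "?step \<longlonglongrightarrow> 0" using Suc by simp_all
  then have "(\<lambda>n. ?d n + ?step n) \<longlonglongrightarrow> 0" using tendsto_add by fastforce
  moreover have "norm (norm (x n - chain T (Suc k) (x n))) \<le> ?d n + ?step n" for n
    using norm_triangle_ineq[of "x n - chain T k (x n)" "chain T k (x n) - chain T (Suc k) (x n)"]
    by (simp del: chain.simps)
  ultimately show ?case by (rule dominated_tendsto_zero)
qed

text \<open>The iterates approach the fixed-point set of each \<open>T\<^sub>i\<close>: the bounded sequence
  \<open>y\<^sub>n = chain T (i - 1) x\<^sub>n\<close> has vanishing displacement \<open>y\<^sub>n - T\<^sub>i y\<^sub>n\<close>, so bounded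
  regularity of \<open>T\<^sub>i\<close> gives \<open>d(y\<^sub>n, Fix T\<^sub>i) \<rightarrow> 0\<close>, and \<open>y\<^sub>n - x\<^sub>n \<rightarrow> 0\<close>.\<close>
lemma iterates_approach_Fix:
  fixes T :: "nat \<Rightarrow> 'a::real_inner \<Rightarrow> 'a"
  assumes qne: "\<forall>i\<in>{1..m}. strongly_qne c (T i)" and "c > 0"
    and z: "z \<in> (\<Inter>i\<in>{1..m}. Fix (T i))"
    and x: "\<And>n. x (Suc n) = chain T m (x n)"
    and i: "i \<in> {1..m}" and reg: "boundedly_regular_op (T i)"
  shows "(\<lambda>n. infdist (x n) (Fix (T i))) \<longlonglongrightarrow> 0"
proof -
  define y where "y n = chain T (i - 1) (x n)" for n
  have "Suc (i - 1) = i" using i by simp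
  then have Ty: "T i (y n) = chain T (Suc (i - 1)) (x n)" for n
    by (metis chain.simps(2) comp_apply y_def)
  have steps: "(\<lambda>n. norm (chain T j (x n) - chain T (Suc j) (x n))) \<longlonglongrightarrow> 0" if "j < m" for j
    using chain_steps_tendsto_zero[where x = x, OF qne \<open>c > 0\<close> z x that] by simp
  have "i - 1 < m" using i by auto
  then have "(\<lambda>n. norm (y n - T i (y n))) \<longlonglongrightarrow> 0"
    unfolding Ty unfolding y_def by (rule steps)
  then have "(\<lambda>n. y n - T i (y n)) \<longlonglongrightarrow> 0" by (simp add: tendsto_norm_zero_iff)
  moreover have "bounded (range y)"
    unfolding y_def using \<open>c > 0\<close> i by (intro bounded_chain_iterates[where x = x, OF qne _ z x]) auto
  ultimately have "(\<lambda>n. infdist (y n) (Fix (T i))) \<longlonglongrightarrow> 0"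
    using reg unfolding boundedly_regular_op_def by blast
  moreover have "(\<lambda>n. norm (x n - y n)) \<longlonglongrightarrow> 0"
    unfolding y_def using \<open>i - 1 < m\<close> by (intro chain_displacement_tendsto_zero steps) simp
  then have "(\<lambda>n. dist (x n) (y n)) \<longlonglongrightarrow> 0" by (simp add: dist_norm)
  ultimately show ?thesis by (rule infdist_tendsto_zero_shift)
qed

theorem theorem7p1:
  fixes T :: "nat \<Rightarrow> 'a::{real_inner, complete_space} \<Rightarrow> 'a" and m :: nat
  assumes "m \<ge> 1"
    and "\<And>i. i \<in> {1..m} \<Longrightarrow> averaged (T i)"
    and "\<And>i. i \<in> {1..m} \<Longrightarrow> boundedly_regular_op (T i)"
    and "(\<Inter>i\<in>{1..m}. Fix (T i)) \<noteq> {}"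
    and "boundedly_regular_family {1..m} (\<lambda>i. Fix (T i))"
  shows "\<forall>x0. \<exists>z \<in> (\<Inter>i\<in>{1..m}. Fix (T i)).
           (\<lambda>n. (comp_ops T m ^^ n) x0) \<longlonglongrightarrow> z"
proof
  fix x0
  define Z where "Z = (\<Inter>i\<in>{1..m}. Fix (T i))"
  define x where "x n = (comp_ops T m ^^ n) x0" for n
  have x: "x (Suc n) = chain T m (x n)" for n by (simp add: x_def comp_ops_eq_chain)
  obtain c where "c > 0" and qne: "\<forall>i\<in>{1..m}. strongly_qne c (T i)"
    using uniform_strongly_qne[of "{1..m}" T] assms(2) by auto
  obtain z0 where z0: "z0 \<in> Z" using assms(4) Z_def by blast
  have "(\<lambda>n. infdist (x n) (Fix (T i))) \<longlonglongrightarrow> 0" if "i \<in> {1..m}" for i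
    using iterates_approach_Fix[where x = x, OF qne \<open>c > 0\<close> z0[unfolded Z_def] x that assms(3)[OF that]] .
  then have "(\<lambda>n. Max ((\<lambda>i. infdist (x n) (Fix (T i))) ` {1..m})) \<longlonglongrightarrow> Max ((\<lambda>i. 0) ` {1..m})"
    using assms(1) by (intro tendsto_Max_image) auto
  moreover have "Max ((\<lambda>i. 0::real) ` {1..m}) = 0" using assms(1) by simp
  moreover have "bounded (range x)"
    using bounded_chain_iterates[where x = x and k = 0, OF qne _ z0[unfolded Z_def] x] \<open>c > 0\<close> by simp
  ultimately have dist_Z: "(\<lambda>n. infdist (x n) Z) \<longlonglongrightarrow> 0"
    using assms(5) unfolding boundedly_regular_family_def Z_def by metis
  have "closed Z"
    unfolding Z_def using assms(2) by (blast intro: closed_INT nonexpansive_closed_Fix averaged_nonexpansive)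
  moreover have "dist (x k) z \<le> dist (x n) z" if "z \<in> Z" "n \<le> k" for z n k
    using iterates_fejer[where x = x, OF qne _ _ x] that \<open>c > 0\<close> unfolding Z_def dist_norm by simp
  ultimately have "\<exists>z\<in>Z. x \<longlonglongrightarrow> z"
    using z0 dist_Z by (intro fejer_monotone_convergent) auto
  then show "\<exists>z \<in> (\<Inter>i\<in>{1..m}. Fix (T i)). (\<lambda>n. (comp_ops T m ^^ n) x0) \<longlonglongrightarrow> z"
    unfolding Z_def x_def .
qed

end
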